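(* For every admissible pair $(a,b)$ (as described in the context), the canonical cube category $\mathbb{C}_{(a,b)}$ is isomorphic to the monoidal subcategory $\mathcal{S}_{(a,b)}$ of $(\mathbf{Top},\times,1)$ generated by the interval $[0,1]$ with respect to the language $L_{(a,b)}$.
   Context: Structural rules: $\mathsf{w}$ (weakening), $\mathsf{e}$ (exchange), $\mathsf{c}$ (contraction). The admissible sets of structural rules $a$ are $\emptyset,\{\mathsf w\},\{\mathsf e\},\{\mathsf w,\mathsf e\},\{\mathsf e,\mathsf c\},\{\mathsf w,\mathsf e,\mathsf c\}$. The admissible signatures $b$ are $(0,1)$, $(0,1,\vee)$, $(0,1,\wedge)$, $(0,1,\vee,\wedge)$, $(0,1,{}')$, $(0,1,\vee,\wedge,{}')$, where $0,1$ are constants, $\vee,\wedge$ binary and ${}'$ unary. The language $L_{(a,b)}$ has terms built from variables and the function symbols of $b$. The canonical cube category $\mathbb{C}_{(a,b)}$ is the syntactic (strict monoidal) category of the theory of the structure $[0,1]$ (with $0,1$ the endpoints, $x\vee y=\max\{x,y\}$, $x\wedge y=\min\{x,y\}$, $x'=1-x$) in $L_{(a,b)}$: its objects are $[n]$, $n\ge 0$ (contexts of $n$ variables $x_1,\dots,x_n$), with $[m]\otimes[n]=[m+n]$; a morphism $[m]\to[n]$ is an $n$-tuple $(t_1,\dots,t_n)$ of terms in the context $x_1,\dots,x_m$ such that, listing all variable occurrences in $t_1,\dots,t_n$ from left to right, every variable occurs unless $\mathsf w\in a$, the variables occur in the order $x_1,\dots,x_m$ unless $\mathsf e\in a$, and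 no variable occurs twice unless $\mathsf c\in a$; two such tuples are identified when they define the same function $[0,1]^m\to[0,1]^n$; composition is substitution. The subcategory $\mathcal S_{(a,b)}$ of $\mathbf{Top}$ has objects $[0,1]^n$ and morphisms generated, under composition and cartesian product of maps, by identities, the operations of $b$ on $[0,1]$ (the points $0,1:1\to[0,1]$, $\max$, $\min$, $x\mapsto 1-x$ as applicable), and the structural maps allowed by $a$: the map $[0,1]\to 1$ if $\mathsf w\in a$, the swap $[0,1]^2\to[0,1]^2$ if $\mathsf e\in a$, the diagonal $[0,1]\to[0,1]^2$ if $\mathsf c\in a$. *)

theory Defs
  imports Main "HOL-Library.FuncSet" Complex_Main
begin

datatype srule = Wk | Ex | Ct

datatype opsym = OJoin | OMeet | ONeg   (* \<or>, \<and>, ' ; constants 0,1 are always present *)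

definition admissible_rules :: "srule set set" where
  "admissible_rules = {{}, {Wk}, {Ex}, {Wk, Ex}, {Ex, Ct}, {Wk, Ex, Ct}}"

definition admissible_sigs :: "opsym set set" where
  "admissible_sigs = {{}, {OJoin}, {OMeet}, {OJoin, OMeet}, {ONeg}, {OJoin, OMeet, ONeg}}"

section \<open>Terms of the language L_(a,b) (variables x_1..x_m are Var 0 .. Var (m-1))\<close>

datatype trm = Var nat | Zero | One | Join trm trm | Meet trm trm | Neg trm

fun in_sig :: "opsym set \<Rightarrow> trm \<Rightarrow> bool" where
  "in_sig b (Var i) = True"
| "in_sig b Zero = True"
| "in_sig b One = True"
| "in_sig b (Join s t) = (OJoin \<in> b \<and> in_sig b s \<and> in_sig b t)"
| "in_sig b (Meet s t) = (OMeet \<in> b \<and> in_sig b s \<and> in_sig b t)"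
| "in_sig b (Neg t) = (ONeg \<in> b \<and> in_sig b t)"

fun occs :: "trm \<Rightarrow> nat list" where
  "occs (Var i) = [i]"
| "occs Zero = []"
| "occs One = []"
| "occs (Join s t) = occs s @ occs t"
| "occs (Meet s t) = occs s @ occs t"
| "occs (Neg t) = occs t"

definition adm_tuple :: "srule set \<Rightarrow> opsym set \<Rightarrow> nat \<Rightarrow> trm list \<Rightarrow> bool" where
  "adm_tuple a b m ts \<longleftrightarrow>
     (\<forall>t\<in>set ts. in_sig b t) \<and>
     (let vs = concat (map occs ts) in
        set vs \<subseteq> {..<m} \<and>
        (Wk \<notin> a \<longrightarrow> {..<m} \<subseteq> set vs) \<and>
        (Ex \<notin> a \<longrightarrow> sorted vs) \<and>
        (Ct \<notin> a \<longrightarrow> distinct vs))"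

fun ev :: "trm \<Rightarrow> real list \<Rightarrow> real" where
  "ev (Var i) x = x ! i"
| "ev Zero x = 0"
| "ev One x = 1"
| "ev (Join s t) x = max (ev s x) (ev t x)"
| "ev (Meet s t) x = min (ev s x) (ev t x)"
| "ev (Neg t) x = 1 - ev t x"

definition cube :: "nat \<Rightarrow> real list set" where
  "cube n = {x. length x = n \<and> set x \<subseteq> {0..1}}"

text \<open>Maps [0,1]^m \<rightarrow> [0,1]^n are represented extensionally, restricted to the cube.\<close>
definition den :: "nat \<Rightarrow> trm list \<Rightarrow> (real list \<Rightarrow> real list)" where
  "den m ts = restrict (\<lambda>x. map (\<lambda>t. ev t x) ts) (cube m)"

text \<open>Morphisms [m] \<rightarrow> [n] of the canonical cube category C_(a,b): admissible n-tuples
  identified when they define the same function, i.e. the defined functions.\<close>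
definition C_hom :: "srule set \<Rightarrow> opsym set \<Rightarrow> nat \<Rightarrow> nat \<Rightarrow> (real list \<Rightarrow> real list) set" where
  "C_hom a b m n = {den m ts | ts. length ts = n \<and> adm_tuple a b m ts}"

text \<open>Composition in C_(a,b): substitution.  Tensor: juxtaposition with shifted variables.\<close>
fun subst :: "trm list \<Rightarrow> trm \<Rightarrow> trm" where
  "subst ts (Var i) = ts ! i"
| "subst ts Zero = Zero"
| "subst ts One = One"
| "subst ts (Join s t) = Join (subst ts s) (subst ts t)"
| "subst ts (Meet s t) = Meet (subst ts s) (subst ts t)"
| "subst ts (Neg t) = Neg (subst ts t)"

definition shift :: "nat \<Rightarrow> trm \<Rightarrow> trm" where
  "shift k t = subst (map Var [k..<k + Suc (Max (insert 0 (set (occs t))))]) t"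

definition tensor_tuple :: "nat \<Rightarrow> trm list \<Rightarrow> trm list \<Rightarrow> trm list" where
  "tensor_tuple m ts us = ts @ map (shift m) us"

definition prod_map :: "nat \<Rightarrow> nat \<Rightarrow> (real list \<Rightarrow> real list) \<Rightarrow> (real list \<Rightarrow> real list) \<Rightarrow> (real list \<Rightarrow> real list)" where
  "prod_map m p f g = restrict (\<lambda>x. f (take m x) @ g (drop m x)) (cube (m + p))"

inductive S_mor :: "srule set \<Rightarrow> opsym set \<Rightarrow> nat \<Rightarrow> nat \<Rightarrow> (real list \<Rightarrow> real list) \<Rightarrow> bool"
  for a :: "srule set" and b :: "opsym set" where
  s_id: "S_mor a b n n (restrict id (cube n))"
| s_zero: "S_mor a b 0 1 (restrict (\<lambda>x. [0]) (cube 0))"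
| s_one: "S_mor a b 0 1 (restrict (\<lambda>x. [1]) (cube 0))"
| s_join: "OJoin \<in> b \<Longrightarrow> S_mor a b 2 1 (restrict (\<lambda>x. [max (x!0) (x!1)]) (cube 2))"
| s_meet: "OMeet \<in> b \<Longrightarrow> S_mor a b 2 1 (restrict (\<lambda>x. [min (x!0) (x!1)]) (cube 2))"
| s_neg: "ONeg \<in> b \<Longrightarrow> S_mor a b 1 1 (restrict (\<lambda>x. [1 - x!0]) (cube 1))"
| s_weak: "Wk \<in> a \<Longrightarrow> S_mor a b 1 0 (restrict (\<lambda>x. []) (cube 1))"
| s_swap: "Ex \<in> a \<Longrightarrow> S_mor a b 2 2 (restrict (\<lambda>x. [x!1, x!0]) (cube 2))"
| s_diag: "Ct \<in> a \<Longrightarrow> S_mor a b 1 2 (restrict (\<lambda>x. [x!0, x!0]) (cube 1))"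
| s_comp: "S_mor a b m n f \<Longrightarrow> S_mor a b n k g \<Longrightarrow> S_mor a b m k (restrict (g \<circ> f) (cube m))"
| s_prod: "S_mor a b m n f \<Longrightarrow> S_mor a b p q g \<Longrightarrow> S_mor a b (m + p) (n + q) (prod_map m p f g)"

definition S_hom :: "srule set \<Rightarrow> opsym set \<Rightarrow> nat \<Rightarrow> nat \<Rightarrow> (real list \<Rightarrow> real list) set" where
  "S_hom a b m n = {f. S_mor a b m n f}"

end

theory Submission
  imports Defs "HOL-Combinatorics.Permutations"
begin

text \<open>
  A tuple of terms factors as a reindexing of the variables followed by a tuple in which every
  variable occurs exactly once and in increasing order.  The reindexing is built in S from
  identities by weakening (dropping variables), the swap (permuting them) and the diagonal
  (duplicating them), exactly as far as the structural rules allow; the linear tuple is built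
  from the operations of the signature by products and composition.  Conversely, every
  generator of S is the denotation of an admissible tuple, and admissibility is preserved by
  substitution and juxtaposition; for substitution this uses that the admissible sets of rules
  allow contraction only together with exchange.
\<close>

lemma ev_cong: "(\<And>i. i \<in> set (occs t) \<Longrightarrow> x ! i = y ! i) \<Longrightarrow> ev t x = ev t y"
  by (induction t) auto

lemma ev_in_unit_interval:
  assumes "set x \<subseteq> {0..1}" and "set (occs t) \<subseteq> {..<length x}"
  shows "ev t x \<in> {0..1}"
  using assms by (induction t) (auto dest!: nth_mem)

lemma occs_subst: "occs (subst \<sigma> t) = concat (map (\<lambda>i. occs (\<sigma> ! i)) (occs t))"
  by (induction t) auto

lemma ev_subst: "set (occs t) \<subseteq> {..<length \<sigma>} \<Longrightarrow> ev (subst \<sigma> t) x = ev t (map (\<lambda>s. ev s x) \<sigma>)"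
  by (induction t) auto

lemma in_sig_subst:
  "in_sig b t \<Longrightarrow> (\<And>i. i \<in> set (occs t) \<Longrightarrow> in_sig b (\<sigma> ! i)) \<Longrightarrow> in_sig b (subst \<sigma> t)"
  by (induction t) auto

lemma occs_subst_upt:
  "set (occs t) \<subseteq> {..<K} \<Longrightarrow> occs (subst (map Var [k..<k + K]) t) = map ((+) k) (occs t)"
  by (induction t) auto

lemma ev_subst_upt:
  "set (occs t) \<subseteq> {..<K} \<Longrightarrow> k \<le> length x \<Longrightarrow>
    ev (subst (map Var [k..<k + K]) t) x = ev t (drop k x)"
  by (induction t) auto

lemma in_sig_subst_upt:
  "in_sig b t \<Longrightarrow> set (occs t) \<subseteq> {..<K} \<Longrightarrow> in_sig b (subst (map Var [k..<k + K]) t)"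
  by (induction t) auto

lemma occs_below_shift_bound: "set (occs t) \<subseteq> {..<Suc (Max (insert 0 (set (occs t))))}"
  by (auto simp: less_Suc_eq_le)

lemma occs_shift: "occs (shift k t) = map ((+) k) (occs t)"
  unfolding shift_def by (rule occs_subst_upt[OF occs_below_shift_bound])

lemma ev_shift: "k \<le> length x \<Longrightarrow> ev (shift k t) x = ev t (drop k x)"
  unfolding shift_def by (rule ev_subst_upt[OF occs_below_shift_bound])

lemma in_sig_shift: "in_sig b t \<Longrightarrow> in_sig b (shift k t)"
  unfolding shift_def by (rule in_sig_subst_upt[OF _ occs_below_shift_bound])

lemma shift_Var: "shift k (Var i) = Var (k + i)"
  by (simp add: shift_def nth_append)

lemma occs_map_Var: "concat (map occs (map Var vs)) = vs"
  by (induction vs) auto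

lemma den_eq_restrictI:
  "(\<And>x. x \<in> cube m \<Longrightarrow> map (\<lambda>t. ev t x) ts = f x) \<Longrightarrow> den m ts = restrict f (cube m)"
  unfolding den_def by (rule restrict_ext)

lemma den_eqI:
  "(\<And>x. x \<in> cube m \<Longrightarrow> map (\<lambda>t. ev t x) ts = map (\<lambda>t. ev t x) us) \<Longrightarrow> den m ts = den m us"
  unfolding den_def by (rule restrict_ext)

lemma den_in_cube:
  "x \<in> cube m \<Longrightarrow> (\<And>t. t \<in> set ts \<Longrightarrow> set (occs t) \<subseteq> {..<m}) \<Longrightarrow> den m ts x \<in> cube (length ts)"
  using ev_in_unit_interval by (fastforce simp: den_def cube_def)

lemma take_drop_in_cube:
  assumes "x \<in> cube (m + p)"
  shows "take m x \<in> cube m" and "drop m x \<in> cube p"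
  using assms set_take_subset[of m x] set_drop_subset[of m x] by (auto simp: cube_def)

lemma den_Var_upt: "den n (map Var [0..<n]) = restrict id (cube n)"
  by (rule den_eq_restrictI) (auto simp: cube_def intro: nth_equalityI)

lemma den_subst:
  assumes "length ts = n" and "\<And>t. t \<in> set ts \<Longrightarrow> set (occs t) \<subseteq> {..<m}"
    and "\<And>u. u \<in> set us \<Longrightarrow> set (occs u) \<subseteq> {..<n}"
  shows "den m (map (subst ts) us) = restrict (den n us \<circ> den m ts) (cube m)"
proof (rule den_eq_restrictI)
  fix x assume x: "x \<in> cube m"
  then have "den m ts x \<in> cube n" using den_in_cube assms(1,2) by blast
  then show "map (\<lambda>t. ev t x) (map (subst ts) us) = (den n us \<circ> den m ts) x"
    using x assms by (auto simp: den_def ev_subst)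
qed

lemma den_tensor_tuple:
  assumes "\<And>t. t \<in> set ts \<Longrightarrow> set (occs t) \<subseteq> {..<m}"
  shows "den (m + p) (tensor_tuple m ts us) = prod_map m p (den m ts) (den p us)"
  unfolding prod_map_def
proof (rule den_eq_restrictI)
  fix x assume x: "x \<in> cube (m + p)"
  then have "length x = m + p" by (simp add: cube_def)
  moreover have "ev t x = ev t (take m x)" if "t \<in> set ts" for t
    using assms[OF that] by (intro ev_cong) auto
  ultimately show
    "map (\<lambda>t. ev t x) (tensor_tuple m ts us) = den m ts (take m x) @ den p us (drop m x)"
    using take_drop_in_cube[OF x] by (simp add: den_def tensor_tuple_def ev_shift)
qed

lemma sorted_concat_map_iff:
  "sorted_wrt (<) (vs :: 'a :: linorder list) \<Longrightarrow> sorted (concat (map B vs)) \<longleftrightarrow>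
    (\<forall>i\<in>set vs. sorted (B i)) \<and>
    (\<forall>i\<in>set vs. \<forall>j\<in>set vs. i < j \<longrightarrow> (\<forall>x\<in>set (B i). \<forall>y\<in>set (B j). x \<le> y))"
proof (induction vs)
  case (Cons v vs)
  then show ?case by (auto simp: sorted_append)
qed simp

lemma distinct_concat_map_iff:
  "distinct vs \<Longrightarrow> distinct (concat (map B vs)) \<longleftrightarrow>
    (\<forall>i\<in>set vs. distinct (B i)) \<and>
    (\<forall>i\<in>set vs. \<forall>j\<in>set vs. i \<noteq> j \<longrightarrow> set (B i) \<inter> set (B j) = {})"
proof (induction vs)
  case (Cons v vs)
  then show ?case by (auto simp: distinct_append) blast
qed simp

lemma sorted_concat_map_sublist:
  assumes "sorted_wrt (<) vs" and "set vs \<subseteq> {..<n}" and "sorted (concat (map B [0..<n]))"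
  shows "sorted (concat (map B vs))"
proof -
  have "\<forall>i\<in>{..<n}. sorted (B i)"
    and "\<forall>i\<in>{..<n}. \<forall>j\<in>{..<n}. i < j \<longrightarrow> (\<forall>x\<in>set (B i). \<forall>y\<in>set (B j). x \<le> y)"
    using assms(3) sorted_concat_map_iff[of "[0..<n]" B] by (simp_all add: atLeast0LessThan)
  then show ?thesis unfolding sorted_concat_map_iff[OF assms(1)] using assms(2) by blast
qed

lemma distinct_concat_map_sublist:
  assumes "distinct vs" and "set vs \<subseteq> {..<n}" and "distinct (concat (map B [0..<n]))"
  shows "distinct (concat (map B vs))"
proof -
  have "\<forall>i\<in>{..<n}. distinct (B i)"
    and "\<forall>i\<in>{..<n}. \<forall>j\<in>{..<n}. i \<noteq> j \<longrightarrow> set (B i) \<inter> set (B j) = {}"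
    using assms(3) distinct_concat_map_iff[of "[0..<n]" B] by (simp_all add: atLeast0LessThan)
  then show ?thesis unfolding distinct_concat_map_iff[OF assms(1)] using assms(2) by blast
qed

lemma map_nth_upt: "j \<le> length xs \<Longrightarrow> map (nth xs) [i..<j] = take (j - i) (drop i xs)"
  by (intro nth_equalityI) auto

lemma map_nth_append: "set is \<subseteq> {..<length xs} \<Longrightarrow> map (nth (xs @ ys)) is = map (nth xs) is"
  by (auto simp: nth_append)

lemma map_plus_upt: "map ((+) p) [0..<k] = [p..<p + k]"
  by (intro nth_equalityI) auto

lemma upt_add_append: "[k..<k + p] @ [k + p..<k + p + q] = [k..<k + (p + q)]"
  by (metis add.assoc le_add1 upt_add_eq_append)

lemma take_drop_eq_append_iff:
  assumes "length A = p" and "length B = q"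
  shows "take (p + q) (drop k xs) = A @ B \<longleftrightarrow>
    take p (drop k xs) = A \<and> take q (drop (k + p) xs) = B"
proof
  assume *: "take (p + q) (drop k xs) = A @ B"
  then have "p + q \<le> length xs - k"
    using assms by (metis length_append length_drop length_take min.absorb_iff1 min.commute)
  then show "take p (drop k xs) = A \<and> take q (drop (k + p) xs) = B"
    using * assms by (simp add: take_add append_eq_append_conv add.commute)
qed (use assms in \<open>simp add: take_add add.commute\<close>)

lemma mset_eq_upt_append:
  assumes "{..<m} \<subseteq> set vs"
  obtains ws where "set ws \<subseteq> set vs" and "mset vs = mset ([0..<m] @ ws)"
proof -
  have "mset_set {0..<m} \<subseteq># mset_set (set vs)"
    using assms by (intro subset_imp_msubset_mset_set) (auto simp: atLeast0LessThan)
  also have "\<dots> \<subseteq># mset vs"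
    using mset_set_set_mset_msubset[of "mset vs"] by simp
  finally obtain C where C: "mset vs = mset [0..<m] + C"
    by (auto simp: mset_subset_eq_exists_conv)
  obtain ws where "mset ws = C" using ex_mset by blast
  moreover from this C have "set ws \<subseteq> set vs"
    by (metis set_mset_mset set_mset_union Un_upper2)
  ultimately show thesis using C that by simp
qed

section \<open>Morphisms of S are denotations of admissible tuples\<close>

lemma adm_tuple_occs: "adm_tuple a b m ts \<Longrightarrow> t \<in> set ts \<Longrightarrow> set (occs t) \<subseteq> {..<m}"
  by (auto simp: adm_tuple_def Let_def)

lemma occs_tuple_subst:
  "concat (map occs (map (subst ts) us)) = concat (map (\<lambda>i. occs (ts ! i)) (concat (map occs us)))"
  by (induction us) (auto simp: occs_subst)

lemma occs_tuple_as_indexed: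
  "concat (map occs ts) = concat (map (\<lambda>i. occs (ts ! i)) [0..<length ts])"
proof -
  have "map occs ts = map (\<lambda>i. occs (ts ! i)) [0..<length ts]"
    by (intro nth_equalityI) auto
  then show ?thesis by simp
qed

lemma Ct_imp_Ex: "a \<in> admissible_rules \<Longrightarrow> Ct \<in> a \<Longrightarrow> Ex \<in> a"
  by (auto simp: admissible_rules_def)

lemma adm_tuple_subst:
  assumes a: "a \<in> admissible_rules" and n: "length ts = n"
    and ts: "adm_tuple a b m ts" and us: "adm_tuple a b n us"
  shows "adm_tuple a b m (map (subst ts) us)"
proof -
  define B where "B i = occs (ts ! i)" for i
  define V where "V = concat (map occs us)"
  have occs: "concat (map occs (map (subst ts) us)) = concat (map B V)"
    unfolding B_def V_def by (rule occs_tuple_subst)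
  have W: "concat (map occs ts) = concat (map B [0..<n])"
    unfolding B_def using occs_tuple_as_indexed n by simp
  have Vn: "set V \<subseteq> {..<n}" and Wm: "set (concat (map B [0..<n])) \<subseteq> {..<m}"
    using us ts unfolding adm_tuple_def Let_def V_def W by simp_all
  have sig: "\<forall>t\<in>set (map (subst ts) us). in_sig b t"
  proof (clarsimp, rule in_sig_subst)
    fix u assume u: "u \<in> set us"
    then show "in_sig b u" using us by (simp add: adm_tuple_def)
    fix i assume "i \<in> set (occs u)"
    then have "i < n" using Vn u unfolding V_def by auto
    then show "in_sig b (ts ! i)" using ts n by (simp add: adm_tuple_def)
  qed
  have bounded: "set (concat (map B V)) \<subseteq> {..<m}"
    using Vn Wm by fastforce
  have covered: "{..<m} \<subseteq> set (concat (map B V))" if "Wk \<notin> a"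
  proof -
    have "{..<n} \<subseteq> set V" and "{..<m} \<subseteq> set (concat (map B [0..<n]))"
      using us ts that unfolding adm_tuple_def Let_def V_def W by simp_all
    then show ?thesis by fastforce
  qed
  have sorted: "sorted (concat (map B V))" if "Ex \<notin> a"
  proof (rule sorted_concat_map_sublist[OF _ Vn])
    have "sorted V" "distinct V"
      using us that Ct_imp_Ex[OF a] unfolding adm_tuple_def Let_def V_def by auto
    then show "sorted_wrt (<) V" by (simp add: strict_sorted_iff)
    show "sorted (concat (map B [0..<n]))" using ts that unfolding adm_tuple_def Let_def W by simp
  qed
  have distinct: "distinct (concat (map B V))" if "Ct \<notin> a"
  proof (rule distinct_concat_map_sublist[OF _ Vn])
    show "distinct V" using us that unfolding adm_tuple_def Let_def V_def by auto
    show "distinct (concat (map B [0..<n]))"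
      using ts that unfolding adm_tuple_def Let_def W by simp
  qed
  show ?thesis
    unfolding adm_tuple_def Let_def occs using sig bounded covered sorted distinct by blast
qed

lemma adm_tuple_tensor:
  assumes ts: "adm_tuple a b m ts" and us: "adm_tuple a b p us"
  shows "adm_tuple a b (m + p) (tensor_tuple m ts us)"
proof -
  define V where "V = concat (map occs us)"
  define W where "W = concat (map occs ts)"
  have occs: "concat (map occs (tensor_tuple m ts us)) = W @ map ((+) m) V"
    unfolding tensor_tuple_def V_def W_def by (simp add: occs_shift map_concat comp_def)
  have Vp: "set V \<subseteq> {..<p}" and Wm: "set W \<subseteq> {..<m}"
    using us ts unfolding adm_tuple_def Let_def V_def W_def by simp_all
  have sig: "\<forall>t\<in>set (tensor_tuple m ts us). in_sig b t"
    using ts us in_sig_shift unfolding adm_tuple_def tensor_tuple_def by auto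
  have covered: "{..<m + p} \<subseteq> set (W @ map ((+) m) V)" if "Wk \<notin> a"
  proof
    fix x assume x: "x \<in> {..<m + p}"
    have "{..<p} \<subseteq> set V" and "{..<m} \<subseteq> set W"
      using us ts that unfolding adm_tuple_def Let_def V_def W_def by simp_all
    then show "x \<in> set (W @ map ((+) m) V)"
      using x by (cases "x < m") (auto simp: image_iff intro!: bexI[of _ "x - m"])
  qed
  have sorted: "sorted (W @ map ((+) m) V)" if "Ex \<notin> a"
  proof -
    have "sorted V" "sorted W"
      using us ts that unfolding adm_tuple_def Let_def V_def W_def by auto
    then show ?thesis
      using Vp Wm by (auto simp: sorted_append sorted_map less_imp_le_nat subset_iff)
  qed
  have distinct: "distinct (W @ map ((+) m) V)" if "Ct \<notin> a"
  proof -
    have "distinct V" "distinct W"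
      using us ts that unfolding adm_tuple_def Let_def V_def W_def by auto
    then show ?thesis using Wm by (auto simp: distinct_map inj_on_def)
  qed
  have "set (W @ map ((+) m) V) \<subseteq> {..<m + p}" using Vp Wm by auto
  then show ?thesis unfolding adm_tuple_def Let_def occs using sig covered sorted distinct by blast
qed

lemma C_homI: "length ts = n \<Longrightarrow> adm_tuple a b m ts \<Longrightarrow> f = den m ts \<Longrightarrow> f \<in> C_hom a b m n"
  unfolding C_hom_def by blast

lemma C_homE:
  assumes "f \<in> C_hom a b m n"
  obtains ts where "length ts = n" "adm_tuple a b m ts" "f = den m ts"
  using assms unfolding C_hom_def by blast

lemma C_hom_comp:
  assumes a: "a \<in> admissible_rules" and f: "f \<in> C_hom a b m n" and g: "g \<in> C_hom a b n k"
  shows "restrict (g \<circ> f) (cube m) \<in> C_hom a b m k"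
proof -
  obtain ts where ts: "length ts = n" "adm_tuple a b m ts" "f = den m ts"
    using f by (rule C_homE)
  obtain us where us: "length us = k" "adm_tuple a b n us" "g = den n us"
    using g by (rule C_homE)
  show ?thesis
  proof (rule C_homI)
    show "adm_tuple a b m (map (subst ts) us)" by (rule adm_tuple_subst[OF a ts(1,2) us(2)])
    show "restrict (g \<circ> f) (cube m) = den m (map (subst ts) us)"
      using den_subst[OF ts(1) adm_tuple_occs[OF ts(2)] adm_tuple_occs[OF us(2)]] ts(3) us(3)
      by simp
  qed (simp add: us)
qed

lemma C_hom_prod:
  assumes f: "f \<in> C_hom a b m n" and g: "g \<in> C_hom a b p q"
  shows "prod_map m p f g \<in> C_hom a b (m + p) (n + q)"
proof -
  obtain ts where ts: "length ts = n" "adm_tuple a b m ts" "f = den m ts"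
    using f by (rule C_homE)
  obtain us where us: "length us = q" "adm_tuple a b p us" "g = den p us"
    using g by (rule C_homE)
  show ?thesis
  proof (rule C_homI)
    show "adm_tuple a b (m + p) (tensor_tuple m ts us)" by (rule adm_tuple_tensor[OF ts(2) us(2)])
    show "prod_map m p f g = den (m + p) (tensor_tuple m ts us)"
      using den_tensor_tuple[OF adm_tuple_occs[OF ts(2)]] ts(3) us(3) by simp
  qed (simp add: ts us tensor_tuple_def)
qed

lemma S_mor_in_C_hom:
  assumes a: "a \<in> admissible_rules"
  shows "S_mor a b m n f \<Longrightarrow> f \<in> C_hom a b m n"
proof (induction rule: S_mor.induct)
  case (s_id n)
  show ?case
    by (rule C_homI[OF _ _ den_Var_upt[symmetric]])
      (auto simp: adm_tuple_def Let_def occs_map_Var simp del: map_map)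
next
  case (s_comp m n f k g)
  show ?case by (rule C_hom_comp[OF a s_comp.IH])
next
  case (s_prod m n f p q g)
  show ?case by (rule C_hom_prod[OF s_prod.IH])
next
  case s_zero
  show ?case by (rule C_homI[of "[Zero]"]) (auto simp: adm_tuple_def den_def)
next
  case s_one
  show ?case by (rule C_homI[of "[One]"]) (auto simp: adm_tuple_def den_def)
next
  case s_join
  show ?case
    by (rule C_homI[of "[Join (Var 0) (Var 1)]"]) (use s_join in \<open>auto simp: adm_tuple_def den_def\<close>)
next
  case s_meet
  show ?case
    by (rule C_homI[of "[Meet (Var 0) (Var 1)]"]) (use s_meet in \<open>auto simp: adm_tuple_def den_def\<close>)
next
  case s_neg
  show ?case
    by (rule C_homI[of "[Neg (Var 0)]"]) (use s_neg in \<open>auto simp: adm_tuple_def den_def\<close>)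
next
  case s_weak
  show ?case
    by (rule C_homI[of "[]"]) (use s_weak in \<open>auto simp: adm_tuple_def den_def\<close>)
next
  case s_swap
  show ?case
    by (rule C_homI[of "[Var 1, Var 0]"]) (use s_swap in \<open>auto simp: adm_tuple_def den_def\<close>)
next
  case s_diag
  show ?case
    by (rule C_homI[of "[Var 0, Var 0]"]) (use s_diag in \<open>auto simp: adm_tuple_def den_def\<close>)
qed

section \<open>Reindexings of variables in S\<close>

lemma S_mor_den_subst:
  assumes "S_mor a b m n (den m ts)" and "S_mor a b n k (den n us)" and "length ts = n"
    and "\<And>t. t \<in> set ts \<Longrightarrow> set (occs t) \<subseteq> {..<m}" and "\<And>u. u \<in> set us \<Longrightarrow> set (occs u) \<subseteq> {..<n}"
  shows "S_mor a b m k (den m (map (subst ts) us))"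
  using S_mor.s_comp[OF assms(1,2)] den_subst[OF assms(3-5)] by simp

lemma S_mor_den_tensor:
  assumes "S_mor a b m n (den m ts)" and "S_mor a b p q (den p us)"
    and "\<And>t. t \<in> set ts \<Longrightarrow> set (occs t) \<subseteq> {..<m}"
  shows "S_mor a b (m + p) (n + q) (den (m + p) (tensor_tuple m ts us))"
  using S_mor.s_prod[OF assms(1,2)] den_tensor_tuple[OF assms(3)] by simp

definition S_reindexing :: "srule set \<Rightarrow> opsym set \<Rightarrow> nat \<Rightarrow> nat list \<Rightarrow> bool" where
  "S_reindexing a b m vs \<longleftrightarrow> S_mor a b m (length vs) (den m (map Var vs))"

lemma S_reindexing_upt: "S_reindexing a b m [0..<m]"
  unfolding S_reindexing_def using S_mor.s_id[of a b m] by (simp add: den_Var_upt)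

lemma S_reindexing_single: "S_reindexing a b 1 [0]"
  using S_reindexing_upt[of a b 1] by simp

lemma S_reindexing_weaken: "Wk \<in> a \<Longrightarrow> S_reindexing a b 1 []"
  unfolding S_reindexing_def using S_mor.s_weak[of a b] by (simp add: den_def)

lemma S_reindexing_swap: "Ex \<in> a \<Longrightarrow> S_reindexing a b 2 [1, 0]"
  unfolding S_reindexing_def using S_mor.s_swap[of a b] by (simp add: den_def numeral_2_eq_2)

lemma S_reindexing_diag: "Ct \<in> a \<Longrightarrow> S_reindexing a b 1 [0, 0]"
  unfolding S_reindexing_def using S_mor.s_diag[of a b] by (simp add: den_def numeral_2_eq_2)

lemma S_reindexing_comp:
  assumes "S_reindexing a b m vs" and "S_reindexing a b (length vs) ws"
    and "set vs \<subseteq> {..<m}" and "set ws \<subseteq> {..<length vs}"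
  shows "S_reindexing a b m (map (nth vs) ws)"
proof -
  have "S_mor a b m (length ws) (den m (map (subst (map Var vs)) (map Var ws)))"
    using assms by (intro S_mor_den_subst[where n = "length vs"]) (auto simp: S_reindexing_def)
  moreover have "map (subst (map Var vs)) (map Var ws) = map Var (map (nth vs) ws)"
    using assms(4) by auto
  ultimately show ?thesis by (metis S_reindexing_def length_map)
qed

lemma S_reindexing_prod:
  assumes "S_reindexing a b m vs" and "S_reindexing a b p ws" and "set vs \<subseteq> {..<m}"
  shows "S_reindexing a b (m + p) (vs @ map ((+) m) ws)"
proof -
  have "S_mor a b (m + p) (length vs + length ws)
      (den (m + p) (tensor_tuple m (map Var vs) (map Var ws)))"
    using assms by (intro S_mor_den_tensor) (auto simp: S_reindexing_def)
  moreover have "tensor_tuple m (map Var vs) (map Var ws) = map Var (vs @ map ((+) m) ws)"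
    by (simp add: tensor_tuple_def shift_Var)
  ultimately show ?thesis by (metis S_reindexing_def length_append length_map)
qed

lemma S_reindexing_Nil: "Wk \<in> a \<Longrightarrow> S_reindexing a b k []"
proof (induction k)
  case 0
  show ?case using S_reindexing_upt[of a b 0] by simp
next
  case (Suc k)
  show ?case
    using S_reindexing_prod[OF S_reindexing_weaken[OF Suc.prems] Suc.IH[OF Suc.prems]] by simp
qed

lemma S_reindexing_strict_sorted:
  "Wk \<in> a \<Longrightarrow> sorted_wrt (<) vs \<Longrightarrow> set vs \<subseteq> {..<m} \<Longrightarrow> S_reindexing a b m vs"
proof (induction vs arbitrary: m rule: rev_induct)
  case Nil
  then show ?case using S_reindexing_Nil by blast
next
  case (snoc j vs)
  have below_j: "set vs \<subseteq> {..<j}" using snoc.prems(2) by (auto simp: sorted_wrt_append)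
  have jm: "j < m" using snoc.prems(3) by simp
  have "S_reindexing a b j vs" using snoc below_j by (simp add: sorted_wrt_append)
  moreover have "S_reindexing a b (1 + (m - j - 1)) [0]"
    using S_reindexing_prod[OF S_reindexing_single S_reindexing_Nil[OF snoc.prems(1)]] by simp
  ultimately have "S_reindexing a b (j + (1 + (m - j - 1))) (vs @ [j])"
    using S_reindexing_prod below_j by fastforce
  then show ?case using jm by simp
qed

lemma S_reindexing_rotate: "Ex \<in> a \<Longrightarrow> S_reindexing a b (Suc k) (k # [0..<k])"
proof (induction k)
  case 0
  show ?case using S_reindexing_single by simp
next
  case (Suc k)
  define s where "s = [0..<k] @ [Suc k, k]"
  have "S_reindexing a b (k + 2) ([0..<k] @ map ((+) k) [1, 0])"
    by (rule S_reindexing_prod[OF S_reindexing_upt S_reindexing_swap[OF Suc.prems]]) auto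
  then have s: "S_reindexing a b (k + 2) s" by (simp add: s_def)
  have "S_reindexing a b (Suc k + 1) ((k # [0..<k]) @ map ((+) (Suc k)) [0])"
    by (rule S_reindexing_prod[OF Suc.IH[OF Suc.prems] S_reindexing_single]) auto
  then have "S_reindexing a b (length s) (k # [0..<k] @ [Suc k])" by (simp add: s_def)
  then have "S_reindexing a b (k + 2) (map (nth s) (k # [0..<k] @ [Suc k]))"
    by (rule S_reindexing_comp[OF s]) (auto simp: s_def)
  moreover have "map (nth s) (k # [0..<k] @ [Suc k]) = Suc k # [0..<Suc k]"
    unfolding s_def by (simp add: nth_append map_nth_append[of "[0..<k]"] map_nth_upt)
  ultimately show ?case by simp
qed

lemma S_reindexing_insert:
  assumes "Ex \<in> a" and "p \<le> n"
  shows "S_reindexing a b (Suc n) ([0..<p] @ n # [p..<n])"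
proof -
  have "S_reindexing a b (p + Suc (n - p)) ([0..<p] @ map ((+) p) ((n - p) # [0..<n - p]))"
    by (rule S_reindexing_prod[OF S_reindexing_upt S_reindexing_rotate[OF assms(1)]]) auto
  moreover have "[0..<p] @ map ((+) p) ((n - p) # [0..<n - p]) = [0..<p] @ n # [p..<n]"
    using assms(2) by (simp add: map_plus_upt)
  ultimately show ?thesis using assms(2) by simp
qed

lemma S_reindexing_permutation:
  "Ex \<in> a \<Longrightarrow> distinct \<sigma> \<Longrightarrow> set \<sigma> = {..<length \<sigma>} \<Longrightarrow> S_reindexing a b (length \<sigma>) \<sigma>"
proof (induction "length \<sigma>" arbitrary: \<sigma>)
  case 0
  then show ?case using S_reindexing_upt[of a b 0] by simp
next
  case (Suc n)
  have "n \<in> set \<sigma>" using Suc.hyps(2) Suc.prems(3) by auto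
  then obtain us ws where \<sigma>: "\<sigma> = us @ n # ws" using split_list by metis
  \<comment> \<open>reorder \<open>us @ ws\<close> by induction, append \<open>n\<close>, then move it to its position\<close>
  have len: "length (us @ ws) = n" using Suc.hyps(2) \<sigma> by simp
  have "n \<notin> set (us @ ws)" using Suc.prems(2) \<sigma> by simp
  then have "set (us @ ws) = set \<sigma> - {n}" using \<sigma> by auto
  also have "\<dots> = {..<n}" using Suc.prems(3) by (simp add: lessThan_Suc flip: Suc.hyps(2))
  finally have set: "set (us @ ws) = {..<n}" .
  have "S_reindexing a b n (us @ ws)"
    using Suc.hyps(1)[of "us @ ws"] Suc.prems(1,2) \<sigma> len set by simp
  then have "S_reindexing a b (n + 1) ((us @ ws) @ map ((+) n) [0])"
    by (rule S_reindexing_prod[OF _ S_reindexing_single]) (use set in blast)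
  then have A: "S_reindexing a b (Suc n) ((us @ ws) @ [n])" by simp
  have "S_reindexing a b (length ((us @ ws) @ [n])) ([0..<length us] @ n # [length us..<n])"
    using S_reindexing_insert[OF Suc.prems(1), of "length us" n] len by simp
  moreover have "set ((us @ ws) @ [n]) \<subseteq> {..<Suc n}" using set by auto
  moreover have "set ([0..<length us] @ n # [length us..<n]) \<subseteq> {..<length ((us @ ws) @ [n])}"
    using len by auto
  ultimately have
    "S_reindexing a b (Suc n) (map (nth ((us @ ws) @ [n])) ([0..<length us] @ n # [length us..<n]))"
    by (rule S_reindexing_comp[OF A])
  moreover have "map (nth ((us @ ws) @ [n])) [0..<length us] = us"
    and "map (nth ((us @ ws) @ [n])) [length us..<n] = ws"
    and "((us @ ws) @ [n]) ! n = n"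
    by (simp_all add: map_nth_upt flip: len)
  ultimately show ?case using Suc.hyps(2) \<sigma> by simp
qed

lemma S_reindexing_mset_eq:
  assumes "Ex \<in> a" and "S_reindexing a b m us" and "set us \<subseteq> {..<m}" and "mset vs = mset us"
  shows "S_reindexing a b m vs"
proof -
  obtain f where f: "f permutes {..<length us}" "permute_list f us = vs"
    using mset_eq_permutation[OF assms(4)] by blast
  define \<sigma> where "\<sigma> = map f [0..<length us]"
  have "distinct \<sigma>" and \<sigma>: "set \<sigma> = {..<length us}" and "length \<sigma> = length us"
    unfolding \<sigma>_def using permutes_inj_on[OF f(1)] permutes_image[OF f(1)]
    by (simp_all add: distinct_map atLeast0LessThan)
  then have "S_reindexing a b (length us) \<sigma>"
    using S_reindexing_permutation[OF assms(1)] by metis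
  then have "S_reindexing a b m (map (nth us) \<sigma>)"
    by (rule S_reindexing_comp[OF assms(2) _ assms(3)]) (simp add: \<sigma>)
  moreover have "map (nth us) \<sigma> = vs"
    using f(2) unfolding \<sigma>_def permute_list_def by (simp add: comp_def)
  ultimately show ?thesis by simp
qed

lemma S_reindexing_append_copy:
  assumes "Ct \<in> a" and "Ex \<in> a" and "j < m"
  shows "S_reindexing a b m ([0..<m] @ [j])"
proof -
  define D where "D = [0..<j] @ [j, j] @ [Suc j..<m]"
  have "S_reindexing a b (j + 1) ([0..<j] @ map ((+) j) [0, 0])"
    by (rule S_reindexing_prod[OF S_reindexing_upt S_reindexing_diag[OF assms(1)]]) auto
  then have "S_reindexing a b ((j + 1) + (m - j - 1))
      (([0..<j] @ map ((+) j) [0, 0]) @ map ((+) (j + 1)) [0..<m - j - 1])"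
    by (rule S_reindexing_prod[OF _ S_reindexing_upt]) auto
  then have "S_reindexing a b m D"
    unfolding D_def using assms(3) by (simp add: map_plus_upt)
  moreover have "set D \<subseteq> {..<m}" using assms(3) by (auto simp: D_def)
  moreover have "[0..<m] = [0..<j] @ j # [Suc j..<m]"
    using assms(3)
    by (metis upt_conv_Cons upt_add_eq_append le0 le_add_diff_inverse less_imp_le_nat)
  then have "mset ([0..<m] @ [j]) = mset D" by (simp add: D_def)
  ultimately show ?thesis by (rule S_reindexing_mset_eq[OF assms(2)])
qed

lemma S_reindexing_upt_append:
  "Ct \<in> a \<Longrightarrow> Ex \<in> a \<Longrightarrow> set ws \<subseteq> {..<m} \<Longrightarrow> S_reindexing a b m ([0..<m] @ ws)"
proof (induction ws rule: rev_induct)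
  case Nil
  then show ?case using S_reindexing_upt[of a b m] by simp
next
  case (snoc j ws)
  then have "S_reindexing a b (m + 1) (([0..<m] @ ws) @ map ((+) m) [0])"
    by (intro S_reindexing_prod[OF _ S_reindexing_single]) auto
  then have "S_reindexing a b (length ([0..<m] @ [j])) ([0..<m] @ ws @ [m])" by simp
  moreover have "S_reindexing a b m ([0..<m] @ [j])"
    using snoc.prems by (intro S_reindexing_append_copy) auto
  ultimately have "S_reindexing a b m (map (nth ([0..<m] @ [j])) ([0..<m] @ ws @ [m]))"
    by (intro S_reindexing_comp) (use snoc.prems in auto)
  moreover have "map (nth ([0..<m] @ [j])) ([0..<m] @ ws) = [0..<m] @ ws"
    using snoc.prems by (subst map_nth_append) (auto intro!: map_idI)
  ultimately show ?case by (simp add: nth_append)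
qed

lemma S_reindexing_contraction:
  assumes Ct: "Ct \<in> a" and Ex: "Ex \<in> a" and bounded: "set vs \<subseteq> {..<m}"
    and covered: "Wk \<notin> a \<Longrightarrow> {..<m} \<subseteq> set vs"
  shows "S_reindexing a b m vs"
proof (cases "Wk \<in> a")
  case True
  have "S_reindexing a b m ([0..<m] @ vs)" by (rule S_reindexing_upt_append[OF Ct Ex bounded])
  moreover have "S_reindexing a b (length ([0..<m] @ vs)) [m..<m + length vs]"
    by (rule S_reindexing_strict_sorted[OF True]) auto
  ultimately have "S_reindexing a b m (map (nth ([0..<m] @ vs)) [m..<m + length vs])"
    by (rule S_reindexing_comp) (use bounded in auto)
  then show ?thesis by (simp add: map_nth_upt)
next
  case False
  then obtain ws where ws: "set ws \<subseteq> set vs" "mset vs = mset ([0..<m] @ ws)"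
    using covered mset_eq_upt_append by blast
  have "S_reindexing a b m ([0..<m] @ ws)"
    using ws(1) bounded by (intro S_reindexing_upt_append[OF Ct Ex]) auto
  then show ?thesis by (rule S_reindexing_mset_eq[OF Ex]) (use ws bounded in auto)
qed

lemma S_reindexing_distinct:
  assumes "distinct vs" and bounded: "set vs \<subseteq> {..<m}"
    and covered: "Wk \<notin> a \<Longrightarrow> {..<m} \<subseteq> set vs" and sorted: "Ex \<notin> a \<Longrightarrow> sorted vs"
  shows "S_reindexing a b m vs"
proof -
  define sv where "sv = sorted_list_of_set (set vs)"
  have sv: "set sv = set vs" "sorted_wrt (<) sv" "mset sv = mset vs"
    using assms(1) by (simp_all add: sv_def set_eq_iff_mset_eq_distinct[symmetric])
  have "S_reindexing a b m sv"
  proof (cases "Wk \<in> a")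
    case True
    then show ?thesis using S_reindexing_strict_sorted sv bounded by metis
  next
    case False
    then have "sv = [0..<m]"
      using covered bounded sv by (intro sorted_distinct_set_unique)
        (auto simp: strict_sorted_iff atLeast0LessThan)
    then show ?thesis using S_reindexing_upt by simp
  qed
  show ?thesis
  proof (cases "Ex \<in> a")
    case True
    then show ?thesis using S_reindexing_mset_eq \<open>S_reindexing a b m sv\<close> sv bounded by metis
  next
    case False
    then have "sv = vs"
      using sorted assms(1) sv by (intro sorted_distinct_set_unique) (auto simp: strict_sorted_iff)
    then show ?thesis using \<open>S_reindexing a b m sv\<close> by simp
  qed
qed

lemma S_reindexing_admissible:
  assumes a: "a \<in> admissible_rules" and "set vs \<subseteq> {..<m}"
    and "Wk \<notin> a \<Longrightarrow> {..<m} \<subseteq> set vs" and "Ex \<notin> a \<Longrightarrow> sorted vs"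
    and "Ct \<notin> a \<Longrightarrow> distinct vs"
  shows "S_reindexing a b m vs"
proof (cases "Ct \<in> a")
  case True
  show ?thesis by (rule S_reindexing_contraction[OF True Ct_imp_Ex[OF a True] assms(2,3)])
next
  case False
  show ?thesis by (rule S_reindexing_distinct[OF assms(5)[OF False] assms(2-4)])
qed

section \<open>Linear terms\<close>

fun linearize :: "nat \<Rightarrow> trm \<Rightarrow> trm" where
  "linearize k (Var i) = Var k"
| "linearize k Zero = Zero"
| "linearize k One = One"
| "linearize k (Join s t) = Join (linearize k s) (linearize (k + length (occs s)) t)"
| "linearize k (Meet s t) = Meet (linearize k s) (linearize (k + length (occs s)) t)"
| "linearize k (Neg t) = Neg (linearize k t)"

fun linearize_tuple :: "nat \<Rightarrow> trm list \<Rightarrow> trm list" where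
  "linearize_tuple k [] = []"
| "linearize_tuple k (t # ts) = linearize k t # linearize_tuple (k + length (occs t)) ts"

lemma occs_linearize: "occs (linearize k t) = [k..<k + length (occs t)]"
  by (induction t arbitrary: k) (simp_all add: upt_add_append)

lemma occs_linearize_tuple:
  "concat (map occs (linearize_tuple k ts)) = [k..<k + length (concat (map occs ts))]"
  by (induction ts arbitrary: k) (simp_all add: occs_linearize upt_add_append)

lemma subst_linearize:
  "take (length (occs t)) (drop k \<sigma>) = map Var (occs t) \<Longrightarrow> subst \<sigma> (linearize k t) = t"
proof (induction t arbitrary: k)
  case (Var i)
  then show ?case by (cases "k < length \<sigma>") (auto simp: take_Suc_conv_app_nth)
qed (auto simp: take_drop_eq_append_iff)

lemma subst_linearize_tuple:
  "take (length (concat (map occs ts))) (drop k \<sigma>) = map Var (concat (map occs ts)) \<Longrightarrow>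
    map (subst \<sigma>) (linearize_tuple k ts) = ts"
  by (induction ts arbitrary: k) (auto simp: take_drop_eq_append_iff subst_linearize)

lemma ev_linearize_add:
  "k \<le> length x \<Longrightarrow> ev (linearize (k + j) t) x = ev (linearize j t) (drop k x)"
  by (induction t arbitrary: j) (auto simp: add.assoc)

lemma ev_linearize_tuple_add:
  "k \<le> length x \<Longrightarrow>
    map (\<lambda>u. ev u x) (linearize_tuple (k + j) ts) =
    map (\<lambda>u. ev u (drop k x)) (linearize_tuple j ts)"
  by (induction ts arbitrary: j) (auto simp: ev_linearize_add add.assoc)

lemma S_mor_linearize_binop:
  fixes op :: "trm \<Rightarrow> trm \<Rightarrow> trm"
  assumes op: "S_mor a b 2 1 (den 2 [op (Var 0) (Var 1)])"
    and occs_op: "\<And>s t. occs (op s t) = occs s @ occs t"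
    and subst_op: "\<And>\<sigma> s t. subst \<sigma> (op s t) = op (subst \<sigma> s) (subst \<sigma> t)"
    and ev_op: "\<And>s t s' t' x.
      ev s x = ev s' x \<Longrightarrow> ev t x = ev t' x \<Longrightarrow> ev (op s t) x = ev (op s' t') x"
    and s: "S_mor a b (length (occs s)) 1 (den (length (occs s)) [linearize 0 s])"
    and t: "S_mor a b (length (occs t)) 1 (den (length (occs t)) [linearize 0 t])"
  shows "S_mor a b (length (occs s) + length (occs t)) 1
           (den (length (occs s) + length (occs t))
             [op (linearize 0 s) (linearize (length (occs s)) t)])"
    (is "S_mor a b (?ls + ?lt) 1 _")
proof -
  have "S_mor a b (?ls + ?lt) (1 + 1)
      (den (?ls + ?lt) (tensor_tuple ?ls [linearize 0 s] [linearize 0 t]))"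
    by (rule S_mor_den_tensor[OF s t]) (simp add: occs_linearize atLeast0LessThan)
  then have pair:
    "S_mor a b (?ls + ?lt) 2 (den (?ls + ?lt) [linearize 0 s, shift ?ls (linearize 0 t)])"
    by (simp add: tensor_tuple_def numeral_2_eq_2)
  have "S_mor a b (?ls + ?lt) 1
      (den (?ls + ?lt)
        (map (subst [linearize 0 s, shift ?ls (linearize 0 t)]) [op (Var 0) (Var 1)]))"
    by (rule S_mor_den_subst[OF pair op]) (auto simp: occs_linearize occs_shift occs_op)
  moreover have "den (?ls + ?lt) [op (linearize 0 s) (shift ?ls (linearize 0 t))]
      = den (?ls + ?lt) [op (linearize 0 s) (linearize ?ls t)]"
  proof (rule den_eqI)
    fix x assume "x \<in> cube (?ls + ?lt)"
    then have "?ls \<le> length x" by (simp add: cube_def)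
    then have "ev (shift ?ls (linearize 0 t)) x = ev (linearize ?ls t) x"
      using ev_shift ev_linearize_add[of ?ls x 0 t] by simp
    from ev_op[OF refl this] show "map (\<lambda>t. ev t x) [op (linearize 0 s) (shift ?ls (linearize 0 t))]
        = map (\<lambda>t. ev t x) [op (linearize 0 s) (linearize ?ls t)]" by simp
  qed
  ultimately show ?thesis by (simp add: subst_op)
qed

lemma S_mor_linearize:
  "in_sig b t \<Longrightarrow> S_mor a b (length (occs t)) 1 (den (length (occs t)) [linearize 0 t])"
proof (induction t)
  case (Var i)
  have "den 1 [Var 0] = restrict id (cube 1)" using den_Var_upt[of 1] by simp
  then have "S_mor a b 1 1 (den 1 [Var 0])" using S_mor.s_id[of a b 1] by simp
  then show ?case by simp
next
  case Zero
  show ?case using S_mor.s_zero[of a b] by (simp add: den_def restrict_def)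
next
  case One
  show ?case using S_mor.s_one[of a b] by (simp add: den_def restrict_def)
next
  case (Join s t)
  have "S_mor a b 2 1 (den 2 [Join (Var 0) (Var 1)])"
    using S_mor.s_join[of b a] Join.prems by (simp add: den_def)
  then show ?case using S_mor_linearize_binop[of a b Join s t] Join by simp
next
  case (Meet s t)
  have "S_mor a b 2 1 (den 2 [Meet (Var 0) (Var 1)])"
    using S_mor.s_meet[of b a] Meet.prems by (simp add: den_def)
  then show ?case using S_mor_linearize_binop[of a b Meet s t] Meet by simp
next
  case (Neg t)
  have "S_mor a b 1 1 (den 1 [Neg (Var 0)])"
    using S_mor.s_neg[of b a] Neg.prems by (simp add: den_def)
  then show ?case
    using S_mor_den_subst[of a b "length (occs t)" 1 "[linearize 0 t]" 1 "[Neg (Var 0)]"] Neg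
    by (simp add: occs_linearize atLeast0LessThan)
qed

lemma S_mor_linearize_tuple:
  assumes "\<And>t. t \<in> set ts \<Longrightarrow> in_sig b t"
  shows "S_mor a b (length (concat (map occs ts))) (length ts)
           (den (length (concat (map occs ts))) (linearize_tuple 0 ts))"
  using assms
proof (induction ts)
  case Nil
  have "den 0 [] = restrict id (cube 0)" using den_Var_upt[of 0] by simp
  then have "S_mor a b 0 0 (den 0 [])" using S_mor.s_id[of a b 0] by simp
  then show ?case by simp
next
  case (Cons t ts)
  let ?l = "length (occs t)" and ?L = "length (concat (map occs ts))"
  have "S_mor a b (?l + ?L) (1 + length ts)
      (den (?l + ?L) (tensor_tuple ?l [linearize 0 t] (linearize_tuple 0 ts)))"
    using Cons by (intro S_mor_den_tensor S_mor_linearize) (auto simp: occs_linearize)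
  moreover have "den (?l + ?L) (tensor_tuple ?l [linearize 0 t] (linearize_tuple 0 ts))
      = den (?l + ?L) (linearize_tuple 0 (t # ts))"
  proof (rule den_eqI)
    fix x assume "x \<in> cube (?l + ?L)"
    then have "?l \<le> length x" by (simp add: cube_def)
    then show "map (\<lambda>u. ev u x) (tensor_tuple ?l [linearize 0 t] (linearize_tuple 0 ts))
        = map (\<lambda>u. ev u x) (linearize_tuple 0 (t # ts))"
      using ev_linearize_tuple_add[where j = 0 and k = ?l] by (simp add: tensor_tuple_def ev_shift)
  qed
  ultimately show ?case by simp
qed

section \<open>Denotations of admissible tuples are morphisms of S\<close>

lemma C_hom_imp_S_mor:
  assumes a: "a \<in> admissible_rules" and f: "f \<in> C_hom a b m n"
  shows "S_mor a b m n f"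
proof -
  obtain ts where ts: "length ts = n" "adm_tuple a b m ts" "f = den m ts"
    using f by (rule C_homE)
  define vs where "vs = concat (map occs ts)"
  have vs: "set vs \<subseteq> {..<m}"
    using ts(2) by (auto simp: adm_tuple_def Let_def vs_def)
  have "S_reindexing a b m vs"
    using ts(2) unfolding vs_def adm_tuple_def Let_def
    by (intro S_reindexing_admissible[OF a]) auto
  then have "S_mor a b m (length vs) (den m (map Var vs))"
    by (simp add: S_reindexing_def)
  moreover have "S_mor a b (length vs) n (den (length vs) (linearize_tuple 0 ts))"
    using S_mor_linearize_tuple[of ts b a] ts(1,2) by (simp add: adm_tuple_def vs_def)
  moreover have "set (occs u) \<subseteq> {..<length vs}" if "u \<in> set (linearize_tuple 0 ts)" for u
  proof -
    have "set (occs u) \<subseteq> set (concat (map occs (linearize_tuple 0 ts)))" using that by auto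
    then show ?thesis using occs_linearize_tuple[of 0 ts] by (simp add: vs_def atLeast0LessThan)
  qed
  ultimately have "S_mor a b m n (den m (map (subst (map Var vs)) (linearize_tuple 0 ts)))"
    using vs by (intro S_mor_den_subst) auto
  moreover have "map (subst (map Var vs)) (linearize_tuple 0 ts) = ts"
    by (rule subst_linearize_tuple) (simp add: vs_def)
  ultimately show ?thesis using ts(3) by simp
qed

theorem proposition1:
  assumes "a \<in> admissible_rules" and "b \<in> admissible_sigs"
  shows "(\<forall>m n. C_hom a b m n = S_hom a b m n)
       \<and> (\<forall>n. den n (map Var [0..<n]) = restrict id (cube n))
       \<and> (\<forall>m n ts us. length ts = n \<longrightarrow> adm_tuple a b m ts \<longrightarrow> adm_tuple a b n us \<longrightarrow>
             den m (map (subst ts) us) = restrict (den n us \<circ> den m ts) (cube m))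
       \<and> (\<forall>m n p q ts us. length ts = n \<longrightarrow> length us = q \<longrightarrow>
             adm_tuple a b m ts \<longrightarrow> adm_tuple a b p us \<longrightarrow>
             den (m + p) (tensor_tuple m ts us) = prod_map m p (den m ts) (den p us))"
proof (intro conjI allI impI)
  fix m n
  show "C_hom a b m n = S_hom a b m n"
    unfolding S_hom_def using S_mor_in_C_hom C_hom_imp_S_mor assms(1) by blast
next
  fix n show "den n (map Var [0..<n]) = restrict id (cube n)" by (rule den_Var_upt)
next
  fix m n ts us
  assume "length ts = n" "adm_tuple a b m ts" "adm_tuple a b n us"
  then show "den m (map (subst ts) us) = restrict (den n us \<circ> den m ts) (cube m)"
    using den_subst adm_tuple_occs by blast
next
  fix m n p q ts us
  assume "adm_tuple a b m ts"
  then show "den (m + p) (tensor_tuple m ts us) = prod_map m p (den m ts) (den p us)"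
    using den_tensor_tuple adm_tuple_occs by blast
qed

end
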